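(* Let $X$ be a standard conic bundle over a field $k$ with $n$ geometrically degenerate fibers, and let $G\subseteq W(\mathsf D_n)$ be its splitting group, i.e. the (finite) image of the Galois representation $\rho:\mathrm{Gal}(\bar k/k)\to \mathrm{Aut}_0(\mathrm{Pic}(\bar X))$. Let $G_2$ be a Sylow $2$-subgroup of $G$. Then $G$ satisfies the (H1) condition if and only if $G_2$ satisfies the (H1) condition.
   Context: A standard conic bundle $\pi:X\to\mathbb P^1$ over $k$ is a geometrically rational surface whose general fiber is a smooth conic and which has, over $\bar k$, $n$ degenerate fibers, each a union of two intersecting lines $q_j^+\cup q_j^-$. $\bar X=X\times_k\bar k$. $\mathrm{Aut}_0(\mathrm{Pic}(\bar X))$ denotes the automorphisms of $\mathrm{Pic}(\bar X)$ preserving the intersection form and $K_X$; the Galois action factors through the Weyl group $W(\mathsf D_n)$ (signed permutations of the pairs $q_j^\pm$ with an even number of sign changes). A finite group $H$ acting on $\mathrm{Pic}(\bar X)$ is said to satisfy the (H1) condition if $\mathrm H^1(H',\mathrm{Pic}(\bar X))=0$ for every subgroup $H'\subseteq H$. *)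

theory Defs
  imports "HOL-Algebra.Group" "HOL-Combinatorics.Permutations"
begin

text \<open>Model of Pic of the geometric surface of a standard conic bundle with n degenerate
fibres: the free Z-module of rank n+2 with basis F (fibre class), S (a section class),
E_0, ..., E_(n-1), where q_j^- = E_j and q_j^+ = F - E_j are the two components of
the j-th degenerate fibre.  An element is a function nat => int; coordinate 0 is the
coefficient of F, coordinate 1 that of S, coordinate j+2 that of E_j; all other
coordinates vanish.\<close>

type_synonym pic = "nat \<Rightarrow> int"

definition picL :: "nat \<Rightarrow> pic set" where
  "picL n = {v. \<forall>k. n + 2 \<le> k \<longrightarrow> v k = 0}"

definition bv :: "nat \<Rightarrow> pic" where
  "bv i = (\<lambda>k. if k = i then 1 else 0)"

text \<open>Action of the signed permutation (sigma, s) of W(D_n): sigma permutes the fibres,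
s (of even cardinality) is the set of fibres j whose components are swapped:
q_j^- goes to q_(sigma j)^- if j is not in s and to q_(sigma j)^+ if j is in s.
F is fixed; the image of S is forced by K-invariance (2S = -K - (e+2)F + sum E_j).\<close>

definition imgE :: "(nat \<Rightarrow> nat) \<Rightarrow> nat set \<Rightarrow> nat \<Rightarrow> pic" where
  "imgE \<sigma> s j = (if j \<in> s then (\<lambda>k. bv 0 k - bv (\<sigma> j + 2) k) else bv (\<sigma> j + 2))"

definition imgS :: "(nat \<Rightarrow> nat) \<Rightarrow> nat set \<Rightarrow> pic" where
  "imgS \<sigma> s = (\<lambda>k. bv 1 k + int (card s div 2) * bv 0 k - (\<Sum>j\<in>s. bv (\<sigma> j + 2) k))"

definition wD_map :: "nat \<Rightarrow> (nat \<Rightarrow> nat) \<Rightarrow> nat set \<Rightarrow> pic \<Rightarrow> pic" where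
  "wD_map n \<sigma> s v = (\<lambda>k. v 0 * bv 0 k + v 1 * imgS \<sigma> s k
                          + (\<Sum>j<n. v (j + 2) * imgE \<sigma> s j k))"

definition WD :: "nat \<Rightarrow> (pic \<Rightarrow> pic) set" where
  "WD n = {wD_map n \<sigma> s | \<sigma> s. \<sigma> permutes {..<n} \<and> s \<subseteq> {..<n} \<and> even (card s)}"

definition WDgrp :: "nat \<Rightarrow> (pic \<Rightarrow> pic) monoid" where
  "WDgrp n = \<lparr>carrier = WD n, monoid.mult = (\<circ>), monoid.one = wD_map n id {}\<rparr>"

definition H1_vanishes :: "nat \<Rightarrow> (pic \<Rightarrow> pic) set \<Rightarrow> bool" where
  "H1_vanishes n H \<longleftrightarrow>
     (\<forall>f. (\<forall>g\<in>H. f g \<in> picL n) \<and>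
          (\<forall>g\<in>H. \<forall>h\<in>H. f (g \<circ> h) = (\<lambda>k. f g k + g (f h) k))
        \<longrightarrow> (\<exists>m\<in>picL n. \<forall>g\<in>H. f g = (\<lambda>k. g m k - m k)))"

definition H1_condition :: "nat \<Rightarrow> (pic \<Rightarrow> pic) set \<Rightarrow> bool" where
  "H1_condition n H \<longleftrightarrow>
     (\<forall>H'. subgroup H' (WDgrp n) \<and> H' \<subseteq> H \<longrightarrow> H1_vanishes n H')"

definition sylow2 :: "nat \<Rightarrow> (pic \<Rightarrow> pic) set \<Rightarrow> (pic \<Rightarrow> pic) set \<Rightarrow> bool" where
  "sylow2 n P G \<longleftrightarrow> subgroup P (WDgrp n) \<and> P \<subseteq> G \<and>
     (\<exists>a. card P = 2 ^ a \<and> 2 ^ a dvd card G \<and> \<not> 2 ^ Suc a dvd card G)"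

end

theory Submission
  imports Defs "HOL-Algebra.Group_Action" "HOL-Algebra.Left_Coset"
begin

(* First, H^1(H, Pic) is killed by 2 for every H in W(D_n): intersecting with
   the lines q_j^+, q_j^- embeds Pic equivariantly into a permutation lattice, with a retraction
   up to the factor 2, and a cocycle with values in a permutation lattice becomes a coboundary
   after summing it over H and dividing the result coordinatewise by |H|.
   Second, for H inside G let H act on the left cosets of G2 in G. Their number is odd, so some
   orbit has odd length r; its stabiliser is conjugate into G2, so by (H1) for G2 every cocycle of
   H restricts to a coboundary there, and corestriction (summing over the orbit) makes r times the
   cocycle a coboundary. As r is odd and 2 also kills the class, the cocycle is a coboundary. *)

section \<open>Actions on left cosets\<close>

definition lcoset_action :: "('a, 'b) monoid_scheme \<Rightarrow> 'a set \<Rightarrow> 'a \<Rightarrow> 'a set \<Rightarrow> 'a set" where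
  "lcoset_action G P = (\<lambda>g. \<lambda>C \<in> lcosets\<^bsub>G\<^esub> P. g <#\<^bsub>G\<^esub> C)"

lemma (in group) group_action_lcoset_action:
  assumes P: "subgroup P G"
  shows "group_action G (lcosets P) (lcoset_action G P)"
proof -
  have C_carrier: "C \<subseteq> carrier G" if "C \<in> lcosets P" for C
    using subgroup.lcosets_carrier[OF P is_group that] .
  have closed: "g <# C \<in> lcosets P" if g: "g \<in> carrier G" and C: "C \<in> lcosets P" for g C
  proof -
    obtain a where a: "a \<in> carrier G" "C = a <# P" using C unfolding LCOSETS_def by blast
    then have "g <# C = (g \<otimes> a) <# P" using lcos_m_assoc[OF subgroup.subset[OF P] g] by simp
    then show ?thesis using a g unfolding LCOSETS_def by auto
  qed
  have assoc: "g <# (h <# C) = (g \<otimes> h) <# C"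
    if "g \<in> carrier G" "h \<in> carrier G" "C \<in> lcosets P" for g h C
    using lcos_m_assoc[OF C_carrier] that by blast
  have bij: "(\<lambda>C \<in> lcosets P. g <# C) \<in> Bij (lcosets P)" if g: "g \<in> carrier G" for g
  proof -
    have cancel: "inv g <# (g <# C) = C" "g <# (inv g <# C) = C" if "C \<in> lcosets P" for C
      using that g assoc lcos_mult_one[OF C_carrier[OF that]] by auto
    have "bij_betw (\<lambda>C. g <# C) (lcosets P) (lcosets P)"
      by (rule bij_betw_byWitness[where f' = "\<lambda>C. inv g <# C"])
        (use g closed cancel in \<open>blast+\<close>)
    then show ?thesis unfolding Bij_def by (auto simp: bij_betw_def inj_on_def)
  qed
  have "(\<lambda>g. \<lambda>C \<in> lcosets P. g <# C) \<in> hom G (BijGroup (lcosets P))"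
  proof (rule homI)
    show "(\<lambda>C \<in> lcosets P. g <# C) \<in> carrier (BijGroup (lcosets P))" if "g \<in> carrier G" for g
      using bij[OF that] by (simp add: BijGroup_def)
    show "(\<lambda>C \<in> lcosets P. (g \<otimes> h) <# C)
        = (\<lambda>C \<in> lcosets P. g <# C) \<otimes>\<^bsub>BijGroup (lcosets P)\<^esub> (\<lambda>C \<in> lcosets P. h <# C)"
      if "g \<in> carrier G" "h \<in> carrier G" for g h
      using that bij closed assoc by (auto simp: BijGroup_def compose_def fun_eq_iff)
  qed
  then show ?thesis
    unfolding group_action_def group_hom_def group_hom_axioms_def lcoset_action_def
    using is_group group_BijGroup by blast
qed

lemma (in group) odd_card_lcosets:
  assumes "finite (carrier G)" "subgroup P G" "card P = 2 ^ a" "\<not> 2 ^ Suc a dvd order G"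
  shows "odd (card (lcosets P))"
proof
  assume "even (card (lcosets P))"
  then have "2 ^ Suc a dvd card (lcosets P) * card P" using assms(3) by auto
  then show False using l_lagrange[OF assms(1,2)] assms(4) by simp
qed

lemma (in group) odd_orbit_on_lcosets:
  assumes fin: "finite (carrier G)" and P: "subgroup P G" and H: "subgroup H G"
    and odd_index: "odd (card (lcosets P))"
  shows "\<exists>x \<in> carrier G.
           odd (card (orbit (G\<lparr>carrier := H\<rparr>) (lcoset_action G P) (x <# P)))"
proof -
  let ?\<phi> = "lcoset_action G P"
  let ?orbs = "orbits (G\<lparr>carrier := H\<rparr>) (lcosets P) ?\<phi>"
  interpret H_act: group_action "G\<lparr>carrier := H\<rparr>" "lcosets P" ?\<phi>
    using group_action.induced_action[OF group_action_lcoset_action[OF P] H] .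
  have "finite (lcosets P)"
    using fin unfolding LCOSETS_def by simp
  have "(\<Sum>orb \<in> ?orbs. card orb) = (\<Sum>orb \<in> ?orbs. \<Sum>C \<in> orb. 1::nat)"
    by simp
  also have "\<dots> = card (lcosets P)"
    using H_act.disjoint_sum[OF \<open>finite (lcosets P)\<close>, of "\<lambda>_. 1::nat"] by simp
  finally have "\<not> (\<forall>orb \<in> ?orbs. even (card orb))"
    using odd_index dvd_sum[of ?orbs 2 card] by auto
  then obtain orb where "orb \<in> ?orbs" "odd (card orb)"
    by blast
  then obtain x where "x \<in> carrier G" "orb = orbit (G\<lparr>carrier := H\<rparr>) ?\<phi> (x <# P)"
    unfolding orbits_def LCOSETS_def by blast
  with \<open>odd (card orb)\<close> show ?thesis by blast
qed

lemma (in group) conj_stabilizer_lcoset_subset: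
  assumes P: "subgroup P G" and H: "subgroup H G" and x: "x \<in> carrier G"
  shows "inv x <# stabilizer (G\<lparr>carrier := H\<rparr>) (lcoset_action G P) (x <# P) #> x \<subseteq> P"
proof
  let ?S = "stabilizer (G\<lparr>carrier := H\<rparr>) (lcoset_action G P) (x <# P)"
  fix y assume "y \<in> inv x <# ?S #> x"
  then obtain h where "h \<in> ?S" and y: "y = inv x \<otimes> h \<otimes> x"
    unfolding l_coset_def r_coset_def by auto
  moreover have "x <# P \<in> lcosets P" using x unfolding LCOSETS_def by auto
  ultimately have h: "h \<in> H" "h <# (x <# P) = x <# P"
    unfolding stabilizer_def lcoset_action_def by auto
  have hx: "h \<in> carrier G" using h(1) subgroup.subset[OF H] by auto
  have "h \<otimes> x \<in> (h \<otimes> x) <# P" using lcos_self[OF m_closed[OF hx x] P] .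
  then have "h \<otimes> x \<in> x <# P" using h(2) lcos_m_assoc[OF subgroup.subset[OF P] hx x] by simp
  then show "y \<in> P" using subgroup.lcos_module_imp[OF P is_group x] hx x y by (simp add: m_assoc)
qed

lemma (in group_action) image_orbit:
  assumes h: "h \<in> carrier G" and c: "c \<in> E"
  shows "\<phi> h ` orbit G \<phi> c = orbit G \<phi> c"
proof
  interpret group G using group_hom group_hom.axioms(1) by auto
  show "\<phi> h ` orbit G \<phi> c \<subseteq> orbit G \<phi> c"
  proof
    fix y assume "y \<in> \<phi> h ` orbit G \<phi> c"
    then obtain g where "g \<in> carrier G" "y = \<phi> (h \<otimes> g) c"
      unfolding orbit_def using composition_rule[OF c h] by auto
    then show "y \<in> orbit G \<phi> c" unfolding orbit_def using h by blast
  qed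
  show "orbit G \<phi> c \<subseteq> \<phi> h ` orbit G \<phi> c"
  proof
    fix y assume "y \<in> orbit G \<phi> c"
    then obtain g where g: "g \<in> carrier G" "y = \<phi> g c" unfolding orbit_def by blast
    moreover have "h \<otimes> (inv h \<otimes> g) = g" using g h by (simp add: m_assoc[symmetric])
    ultimately have "y = \<phi> h (\<phi> (inv h \<otimes> g) c)"
      using composition_rule[OF c h, of "inv h \<otimes> g"] h by simp
    then show "y \<in> \<phi> h ` orbit G \<phi> c" unfolding orbit_def using g h by auto
  qed
qed

section \<open>Cocycles of groups of lattice maps\<close>

definition cocycle :: "pic set \<Rightarrow> (pic \<Rightarrow> pic) set \<Rightarrow> ((pic \<Rightarrow> pic) \<Rightarrow> pic) \<Rightarrow> bool" where
  "cocycle L H f \<longleftrightarrow>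
     (\<forall>g\<in>H. f g \<in> L) \<and> (\<forall>g\<in>H. \<forall>h\<in>H. f (g \<circ> h) = (\<lambda>k. f g k + g (f h) k))"

definition coboundary :: "pic set \<Rightarrow> (pic \<Rightarrow> pic) set \<Rightarrow> ((pic \<Rightarrow> pic) \<Rightarrow> pic) \<Rightarrow> bool" where
  "coboundary L H f \<longleftrightarrow> (\<exists>m\<in>L. \<forall>g\<in>H. f g = (\<lambda>k. g m k - m k))"

definition H1_trivial :: "pic set \<Rightarrow> (pic \<Rightarrow> pic) set \<Rightarrow> bool" where
  "H1_trivial L H \<longleftrightarrow> (\<forall>f. cocycle L H f \<longrightarrow> coboundary L H f)"

lemma H1_vanishes_iff_H1_trivial: "H1_vanishes n H \<longleftrightarrow> H1_trivial (picL n) H"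
  unfolding H1_vanishes_def H1_trivial_def cocycle_def coboundary_def by blast

lemma cocycle_subset: "cocycle L H f \<Longrightarrow> K \<subseteq> H \<Longrightarrow> cocycle L K f"
  unfolding cocycle_def by blast

(* The identity only has to fix L: elements of W(D_n) as defined in Defs kill the coordinates
   beyond n + 1, so the identity of WDgrp n is not the identity function. *)
locale pic_action = group \<Gamma> for \<Gamma> :: "(pic \<Rightarrow> pic) monoid" (structure) +
  fixes L :: "pic set"
  assumes mult_eq_comp: "g \<otimes> h = g \<circ> h"
    and one_on_L: "v \<in> L \<Longrightarrow> \<one> v = v"
    and action_in_L: "g \<in> carrier \<Gamma> \<Longrightarrow> v \<in> L \<Longrightarrow> g v \<in> L"
    and action_lincomb:
      "g \<in> carrier \<Gamma> \<Longrightarrow> g (\<lambda>k. a * x k + b * y k) = (\<lambda>k. a * g x k + b * g y k)"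
    and zero_in_L: "(\<lambda>k. 0) \<in> L"
    and lincomb_in_L: "x \<in> L \<Longrightarrow> y \<in> L \<Longrightarrow> (\<lambda>k. a * x k + b * y k) \<in> L"
begin

lemma action_diff: "g \<in> carrier \<Gamma> \<Longrightarrow> g (\<lambda>k. x k - y k) = (\<lambda>k. g x k - g y k)"
  using action_lincomb[of g 1 x "-1" y] by simp

lemma action_sum:
  assumes g: "g \<in> carrier \<Gamma>"
  shows "g (\<lambda>k. \<Sum>c\<in>C. F c k) = (\<lambda>k. \<Sum>c\<in>C. g (F c) k)"
proof (induction C rule: infinite_finite_induct)
  have zero: "g (\<lambda>k. 0) = (\<lambda>k. 0)"
    using action_lincomb[OF g, of 0 "\<lambda>k. 0" 0 "\<lambda>k. 0"] by simp
  { case (infinite C) then show ?case using zero by simp }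
  { case empty then show ?case using zero by simp }
next
  case (insert c C)
  then show ?case using action_lincomb[OF g, of 1 "F c" 1] by simp
qed

lemma diff_in_L: "x \<in> L \<Longrightarrow> y \<in> L \<Longrightarrow> (\<lambda>k. x k - y k) \<in> L"
  using lincomb_in_L[of x y 1 "-1"] by simp

lemma sum_in_L: "(\<And>c. c \<in> C \<Longrightarrow> F c \<in> L) \<Longrightarrow> (\<lambda>k. \<Sum>c\<in>C. F c k) \<in> L"
proof (induction C rule: infinite_finite_induct)
  case (insert c C)
  then show ?case using lincomb_in_L[of "F c" _ 1 1] by simp
qed (simp_all add: zero_in_L)

lemma subgroup_pic_action:
  assumes "subgroup H \<Gamma>"
  shows "pic_action (\<Gamma>\<lparr>carrier := H\<rparr>) L"
proof -
  interpret H: group "\<Gamma>\<lparr>carrier := H\<rparr>" using subgroup_imp_group[OF assms] .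
  show ?thesis
    using subgroup.subset[OF assms]
    by unfold_locales (auto simp: mult_eq_comp one_on_L action_in_L action_lincomb
                                  zero_in_L lincomb_in_L)
qed

lemma coboundary_of_coprime_multiples:
  assumes H: "H \<subseteq> carrier \<Gamma>" and "coprime a b"
    and "coboundary L H (\<lambda>g k. a * f g k)" and "coboundary L H (\<lambda>g k. b * f g k)"
  shows "coboundary L H f"
proof -
  obtain u v where uv: "u * a + v * b = 1"
    using bezout_int[of a b] \<open>coprime a b\<close> by auto
  obtain ma mb where "ma \<in> L" "mb \<in> L"
    and ma: "\<And>g. g \<in> H \<Longrightarrow> (\<lambda>k. a * f g k) = (\<lambda>k. g ma k - ma k)"
    and mb: "\<And>g. g \<in> H \<Longrightarrow> (\<lambda>k. b * f g k) = (\<lambda>k. g mb k - mb k)"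
    using assms(3,4) unfolding coboundary_def by blast
  define m where "m = (\<lambda>k. u * ma k + v * mb k)"
  have "f g = (\<lambda>k. g m k - m k)" if g: "g \<in> H" for g
  proof
    fix k
    have "f g k = u * (a * f g k) + v * (b * f g k)"
      using uv by (metis mult.assoc distrib_right mult_1)
    also have "\<dots> = u * (g ma k - ma k) + v * (g mb k - mb k)"
      using fun_cong[OF ma[OF g], of k] fun_cong[OF mb[OF g], of k] by simp
    also have "\<dots> = g m k - m k"
      using g H by (simp add: m_def action_lincomb subset_iff algebra_simps)
    finally show "f g k = g m k - m k" .
  qed
  moreover have "m \<in> L" unfolding m_def using \<open>ma \<in> L\<close> \<open>mb \<in> L\<close> by (rule lincomb_in_L)
  ultimately show ?thesis unfolding coboundary_def by blast
qed

lemma coboundary_card_multiple: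
  assumes "cocycle L (carrier \<Gamma>) f"
  shows "coboundary L (carrier \<Gamma>) (\<lambda>g k. int (card (carrier \<Gamma>)) * f g k)"
proof -
  have fL: "\<And>g. g \<in> carrier \<Gamma> \<Longrightarrow> f g \<in> L"
    and f_comp: "\<And>g h. g \<in> carrier \<Gamma> \<Longrightarrow> h \<in> carrier \<Gamma> \<Longrightarrow> f (g \<otimes> h) = (\<lambda>k. f g k + g (f h) k)"
    using assms unfolding cocycle_def mult_eq_comp by auto
  define w where "w = (\<lambda>k. - (\<Sum>g\<in>carrier \<Gamma>. f g k))"
  have "(\<lambda>k. int (card (carrier \<Gamma>)) * f h k) = (\<lambda>k. h w k - w k)" if h: "h \<in> carrier \<Gamma>" for h
  proof -
    have "(\<Sum>g\<in>carrier \<Gamma>. h (f g) k)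
        = (\<Sum>g\<in>carrier \<Gamma>. f g k) - int (card (carrier \<Gamma>)) * f h k" for k
    proof -
      have "(\<Sum>g\<in>carrier \<Gamma>. h (f g) k) = (\<Sum>g\<in>carrier \<Gamma>. f (h \<otimes> g) k - f h k)"
        using h f_comp by (intro sum.cong) auto
      also have "\<dots> = (\<Sum>g\<in>carrier \<Gamma>. f g k) - int (card (carrier \<Gamma>)) * f h k"
        using sum.reindex[OF inj_on_cmult[OF h], of "\<lambda>g. f g k"] surj_const_mult[OF h]
        by (simp add: sum_subtractf)
      finally show ?thesis .
    qed
    then have "h (\<lambda>k. \<Sum>g\<in>carrier \<Gamma>. f g k)
        = (\<lambda>k. (\<Sum>g\<in>carrier \<Gamma>. f g k) - int (card (carrier \<Gamma>)) * f h k)"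
      using h by (simp add: action_sum)
    then show ?thesis
      unfolding w_def using action_lincomb[OF h, of "-1" _ 0] by simp
  qed
  moreover have "w \<in> L" unfolding w_def
    using sum_in_L[of "carrier \<Gamma>" f] fL lincomb_in_L[of _ _ "-1" 0] by simp
  ultimately show ?thesis unfolding coboundary_def by blast
qed

lemma stabilizer_coboundary_transfer:
  assumes act: "group_action \<Gamma> X \<phi>" and c: "c \<in> X" and f: "cocycle L (carrier \<Gamma>) f"
    and m: "\<And>s. s \<in> stabilizer \<Gamma> \<phi> c \<Longrightarrow> f s = (\<lambda>k. s m k - m k)"
    and g: "g \<in> carrier \<Gamma>" "g' \<in> carrier \<Gamma>" and same_point: "\<phi> g c = \<phi> g' c"
  shows "(\<lambda>k. g m k - f g k) = (\<lambda>k. g' m k - f g' k)"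
proof -
  interpret group_action \<Gamma> X \<phi> by (rule act)
  define s where "s = inv g' \<otimes> g"
  have s_carrier: "s \<in> carrier \<Gamma>" unfolding s_def using g by simp
  have "\<phi> s c = \<phi> (inv g') (\<phi> g' c)"
    unfolding s_def using composition_rule[OF c] g same_point by simp
  also have "\<dots> = c" using orbit_sym_aux[OF g(2) c refl] .
  finally have "s \<in> stabilizer \<Gamma> \<phi> c" unfolding stabilizer_def using s_carrier by simp
  then have fs: "f s = (\<lambda>k. s m k - m k)" by (rule m)
  have gs: "g = g' \<otimes> s" unfolding s_def using g by (simp add: m_assoc[symmetric])
  have "f g = (\<lambda>k. f g' k + g' (f s) k)"
    using f g s_carrier gs unfolding cocycle_def by (simp add: mult_eq_comp)
  also have "g' (f s) = (\<lambda>k. g m k - g' m k)"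
    unfolding fs action_diff[OF g(2)] using gs by (simp add: mult_eq_comp)
  finally show ?thesis by auto
qed

(* Corestriction after restriction to the stabiliser: the point \<phi> g c of the orbit carries
   g m - f g, which by the previous lemma does not depend on the choice of g. *)
lemma coboundary_orbit_multiple:
  assumes act: "group_action \<Gamma> X \<phi>" and c: "c \<in> X"
    and f: "cocycle L (carrier \<Gamma>) f" and stab: "coboundary L (stabilizer \<Gamma> \<phi> c) f"
  shows "coboundary L (carrier \<Gamma>) (\<lambda>g k. int (card (orbit \<Gamma> \<phi> c)) * f g k)"
proof -
  interpret group_action \<Gamma> X \<phi> by (rule act)
  let ?O = "orbit \<Gamma> \<phi> c"
  have fL: "\<And>g. g \<in> carrier \<Gamma> \<Longrightarrow> f g \<in> L"
    and f_comp: "\<And>g h. g \<in> carrier \<Gamma> \<Longrightarrow> h \<in> carrier \<Gamma> \<Longrightarrow> f (g \<otimes> h) = (\<lambda>k. f g k + g (f h) k)"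
    using f unfolding cocycle_def mult_eq_comp by auto
  obtain m where "m \<in> L" and m: "\<And>s. s \<in> stabilizer \<Gamma> \<phi> c \<Longrightarrow> f s = (\<lambda>k. s m k - m k)"
    using stab unfolding coboundary_def by blast
  define rep where "rep y = (SOME g. g \<in> carrier \<Gamma> \<and> \<phi> g c = y)" for y
  define M where "M y = (\<lambda>k. rep y m k - f (rep y) k)" for y
  have M: "M (\<phi> g c) = (\<lambda>k. g m k - f g k)" if g: "g \<in> carrier \<Gamma>" for g
  proof -
    have "rep (\<phi> g c) \<in> carrier \<Gamma> \<and> \<phi> (rep (\<phi> g c)) c = \<phi> g c"
      unfolding rep_def using someI[of "\<lambda>g'. g' \<in> carrier \<Gamma> \<and> \<phi> g' c = \<phi> g c" g] g by auto
    then show ?thesis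
      unfolding M_def using stabilizer_coboundary_transfer[OF act c f m] g by metis
  qed
  have M_L: "M y \<in> L" if "y \<in> ?O" for y
    using that M fL action_in_L[OF _ \<open>m \<in> L\<close>] diff_in_L unfolding orbit_def by auto
  have M_action: "h (M y) = (\<lambda>k. M (\<phi> h y) k + f h k)" if h: "h \<in> carrier \<Gamma>" and y: "y \<in> ?O" for h y
  proof -
    obtain g where g: "g \<in> carrier \<Gamma>" and y_def: "y = \<phi> g c" using y unfolding orbit_def by blast
    have "M (\<phi> h y) = M (\<phi> (h \<otimes> g) c)" unfolding y_def using composition_rule[OF c h g] by simp
    also have "\<dots> = (\<lambda>k. h (g m) k - f h k - h (f g) k)"
      using M[OF m_closed[OF h g]] f_comp[OF h g] by (simp add: mult_eq_comp algebra_simps)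
    finally show ?thesis unfolding y_def M[OF g] action_diff[OF h] by simp
  qed
  define Z where "Z = (\<lambda>k. \<Sum>y\<in>?O. M y k)"
  have "(\<lambda>k. int (card ?O) * f h k) = (\<lambda>k. h Z k - Z k)" if h: "h \<in> carrier \<Gamma>" for h
  proof -
    have "inj_on (\<phi> h) ?O"
      by (rule inj_on_subset[OF inj_prop[OF h]]) (auto simp: orbit_def intro: element_image[OF _ c])
    then have "(\<Sum>y\<in>?O. M (\<phi> h y) k) = Z k" for k
      unfolding Z_def using sum.reindex[of "\<phi> h" ?O "\<lambda>y. M y k"] image_orbit[OF h c] by simp
    then have "h Z = (\<lambda>k. Z k + int (card ?O) * f h k)"
      unfolding Z_def using h M_action by (simp add: action_sum sum.distrib)
    then show ?thesis by simp
  qed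
  moreover have "Z \<in> L" unfolding Z_def using M_L by (rule sum_in_L)
  ultimately show ?thesis unfolding coboundary_def by blast
qed

lemma cocycle_conj:
  assumes x: "x \<in> carrier \<Gamma>" and K: "K \<subseteq> carrier \<Gamma>" and f: "cocycle L (x <# K #> inv x) f"
  shows "cocycle L K (\<lambda>q. (inv x) (f (x \<otimes> q \<otimes> inv x)))"
  unfolding cocycle_def
proof (intro conjI ballI)
  let ?c = "\<lambda>q. x \<otimes> q \<otimes> inv x"
  have conj_mem: "?c q \<in> x <# K #> inv x" if "q \<in> K" for q
    using that unfolding l_coset_def r_coset_def by auto
  have cancel: "inv x \<otimes> (x \<otimes> y) = y" if "y \<in> carrier \<Gamma>" for y
    using that x by (simp add: m_assoc[symmetric])
  show "(inv x) (f (?c q)) \<in> L" if "q \<in> K" for q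
    using f conj_mem[OF that] x action_in_L unfolding cocycle_def by auto
  fix q1 q2 assume q: "q1 \<in> K" "q2 \<in> K"
  then have q_carrier: "q1 \<in> carrier \<Gamma>" "q2 \<in> carrier \<Gamma>" using K by auto
  have "?c (q1 \<otimes> q2) = ?c q1 \<otimes> ?c q2"
    using q_carrier x by (simp add: m_assoc cancel)
  then have c_comp: "?c (q1 \<circ> q2) = ?c q1 \<circ> ?c q2" by (simp add: mult_eq_comp)
  have "inv x \<otimes> ?c q1 = q1 \<otimes> inv x"
    using q_carrier x by (simp add: m_assoc cancel)
  then have "(inv x) (?c q1 (f (?c q2))) = q1 ((inv x) (f (?c q2)))"
    unfolding mult_eq_comp by (metis comp_apply)
  moreover have "f (?c q1 \<circ> ?c q2) = (\<lambda>k. f (?c q1) k + ?c q1 (f (?c q2)) k)"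
    using f conj_mem q unfolding cocycle_def by blast
  ultimately show "(inv x) (f (?c (q1 \<circ> q2)))
      = (\<lambda>k. (inv x) (f (?c q1)) k + q1 ((inv x) (f (?c q2))) k)"
    unfolding c_comp using action_lincomb[of "inv x" 1 _ 1] x by simp
qed

lemma H1_trivial_conj:
  assumes x: "x \<in> carrier \<Gamma>" and K: "K \<subseteq> carrier \<Gamma>" and H1: "H1_trivial L K"
  shows "H1_trivial L (x <# K #> inv x)"
  unfolding H1_trivial_def
proof (intro allI impI)
  fix f assume f: "cocycle L (x <# K #> inv x) f"
  obtain m where "m \<in> L"
    and m: "\<And>q. q \<in> K \<Longrightarrow> (inv x) (f (x \<otimes> q \<otimes> inv x)) = (\<lambda>k. q m k - m k)"
    using H1 cocycle_conj[OF x K f] unfolding H1_trivial_def coboundary_def by blast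
  have "f h = (\<lambda>k. h (x m) k - x m k)" if h: "h \<in> x <# K #> inv x" for h
  proof -
    obtain q where q: "q \<in> K" and h_def: "h = x \<otimes> q \<otimes> inv x"
      using h unfolding l_coset_def r_coset_def by auto
    have "f h \<in> L" using f h unfolding cocycle_def by blast
    moreover have "x ((inv x) v) = \<one> v" for v
      using r_inv[OF x] unfolding mult_eq_comp by (metis comp_apply)
    ultimately have "f h = x ((inv x) (f h))" using one_on_L by simp
    also have "\<dots> = (\<lambda>k. x (q m) k - x m k)" using m[OF q] x h_def by (simp add: action_diff)
    also have "x \<otimes> q = h \<otimes> x"
      unfolding h_def using x q K by (auto simp: m_assoc)
    then have "x (q m) = h (x m)"
      unfolding mult_eq_comp by (metis comp_apply)
    finally show ?thesis .
  qed
  then show "coboundary L (x <# K #> inv x) f"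
    unfolding coboundary_def using action_in_L[OF x \<open>m \<in> L\<close>] by blast
qed

lemma H1_trivial_if_odd_index:
  assumes fin: "finite (carrier \<Gamma>)" and P: "subgroup P \<Gamma>"
    and odd_index: "odd (card (lcosets P))"
    and H1_P: "\<And>Q. subgroup Q \<Gamma> \<Longrightarrow> Q \<subseteq> P \<Longrightarrow> H1_trivial L Q"
    and H: "subgroup H \<Gamma>"
    and two_torsion: "\<And>f. cocycle L H f \<Longrightarrow> coboundary L H (\<lambda>g k. 2 * f g k)"
  shows "H1_trivial L H"
  unfolding H1_trivial_def
proof (intro allI impI)
  fix f assume f: "cocycle L H f"
  let ?\<phi> = "lcoset_action \<Gamma> P"
  let ?\<Gamma>H = "\<Gamma>\<lparr>carrier := H\<rparr>"
  obtain x where x: "x \<in> carrier \<Gamma>" and odd_orbit: "odd (card (orbit ?\<Gamma>H ?\<phi> (x <# P)))"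
    using odd_orbit_on_lcosets[OF fin P H odd_index] by blast
  let ?S = "stabilizer ?\<Gamma>H ?\<phi> (x <# P)"
  have act: "group_action ?\<Gamma>H (lcosets P) ?\<phi>"
    using group_action.induced_action[OF group_action_lcoset_action[OF P] H] .
  interpret \<Gamma>H: pic_action ?\<Gamma>H L using subgroup_pic_action[OF H] .
  have xP: "x <# P \<in> lcosets P" using x unfolding LCOSETS_def by auto
  have S: "subgroup ?S \<Gamma>"
    using incl_subgroup[OF H group_action.stabilizer_subgroup[OF act xP]] .
  have "subgroup (inv x <# ?S #> x) \<Gamma>" using subgroup_conjugation_is_surj1[OF x S] .
  moreover have "inv x <# ?S #> x \<subseteq> P" using conj_stabilizer_lcoset_subset[OF P H x] .
  ultimately have "H1_trivial L (x <# (inv x <# ?S #> x) #> inv x)"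
    using H1_trivial_conj[OF x] H1_P subgroup.subset by blast
  then have "H1_trivial L ?S"
    using subgroup_conjugation_is_surj0[OF x subgroup.subset[OF S]] by simp
  moreover have "cocycle L ?S f"
    using cocycle_subset[OF f] group_action.stabilizer_subset[OF act] by simp
  ultimately have "coboundary L ?S f" unfolding H1_trivial_def by blast
  then have odd_multiple:
      "coboundary L H (\<lambda>g k. int (card (orbit ?\<Gamma>H ?\<phi> (x <# P))) * f g k)"
    using \<Gamma>H.coboundary_orbit_multiple[OF act xP] f by simp
  have "coprime (int (card (orbit ?\<Gamma>H ?\<phi> (x <# P)))) 2" using odd_orbit by simp
  from \<Gamma>H.coboundary_of_coprime_multiples[OF _ this odd_multiple two_torsion[OF f]]
  show "coboundary L H f" by simp
qed

end

section \<open>The Weyl group W(D_n) acting on Pic\<close>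

(* Coordinates are addressed as 0, 1 and j + 2; keep the simplifier from rewriting them to Suc. *)
declare One_nat_def [simp del] add_2_eq_Suc [simp del] add_2_eq_Suc' [simp del]

lemma wD_map_coord0:
  assumes "s \<subseteq> {..<n}"
  shows "wD_map n \<sigma> s v 0 = v 0 + int (card s div 2) * v 1 + (\<Sum>j\<in>s. v (j + 2))"
proof -
  have "(\<Sum>j<n. v (j + 2) * imgE \<sigma> s j 0) = (\<Sum>j<n. if j \<in> s then v (j + 2) else 0)"
    by (rule sum.cong) (auto simp: imgE_def bv_def)
  also have "\<dots> = (\<Sum>j\<in>s. v (j + 2))"
    using assms by (simp add: sum.inter_restrict[symmetric] Int_absorb1)
  finally show ?thesis unfolding wD_map_def imgS_def by (simp add: bv_def)
qed

lemma wD_map_coord1: "wD_map n \<sigma> s v 1 = v 1"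
proof -
  have "(\<Sum>j<n. v (j + 2) * imgE \<sigma> s j 1) = 0"
    by (rule sum.neutral) (auto simp: imgE_def bv_def)
  then show ?thesis unfolding wD_map_def imgS_def by (simp add: bv_def)
qed

lemma wD_map_coordE:
  assumes \<sigma>: "\<sigma> permutes {..<n}" and s: "s \<subseteq> {..<n}" and j: "j < n"
  shows "wD_map n \<sigma> s v (\<sigma> j + 2) = (if j \<in> s then - v 1 - v (j + 2) else v (j + 2))"
proof -
  have \<sigma>_eq: "(\<sigma> i = \<sigma> j) = (i = j)" "(\<sigma> j = \<sigma> i) = (i = j)" if "i < n" for i
    using permutes_inj_on[OF \<sigma>] that j by (auto dest: inj_onD)
  have "(\<Sum>i<n. v (i + 2) * imgE \<sigma> s i (\<sigma> j + 2))
      = (\<Sum>i<n. if i = j then (if j \<in> s then - v (j + 2) else v (j + 2)) else 0)"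
    by (rule sum.cong) (auto simp: imgE_def bv_def \<sigma>_eq)
  moreover have "(\<Sum>i\<in>s. bv (\<sigma> i + 2) (\<sigma> j + 2)) = (\<Sum>i\<in>s. if i = j then 1 else 0)"
    by (rule sum.cong) (use s in \<open>auto simp: bv_def \<sigma>_eq\<close>)
  ultimately show ?thesis
    using j finite_subset[OF s] unfolding wD_map_def imgS_def by (simp add: bv_def)
qed

lemma wD_map_beyond:
  assumes \<sigma>: "\<sigma> permutes {..<n}" and s: "s \<subseteq> {..<n}" and k: "n + 2 \<le> k"
  shows "wD_map n \<sigma> s v k = 0"
proof -
  have \<sigma>_lt: "\<And>i. i < n \<Longrightarrow> \<sigma> i < n" using permutes_in_image[OF \<sigma>] by simp
  have "(\<Sum>i<n. v (i + 2) * imgE \<sigma> s i k) = 0"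
    by (rule sum.neutral) (use k \<sigma>_lt in \<open>fastforce simp: imgE_def bv_def\<close>)
  moreover have "(\<Sum>i\<in>s. bv (\<sigma> i + 2) k) = 0"
    by (rule sum.neutral) (use k s \<sigma>_lt in \<open>fastforce simp: bv_def\<close>)
  ultimately show ?thesis unfolding wD_map_def imgS_def using k by (simp add: bv_def)
qed

lemma pic_eqI:
  fixes u w :: pic
  assumes \<tau>: "\<tau> permutes {..<n}" and "u 0 = w 0" "u 1 = w 1"
    and "\<And>j. j < n \<Longrightarrow> u (\<tau> j + 2) = w (\<tau> j + 2)"
    and "\<And>k. n + 2 \<le> k \<Longrightarrow> u k = w k"
  shows "u = w"
proof
  fix k
  consider "k = 0" | "k = 1" | "n + 2 \<le> k" | j where "j < n" "k = \<tau> j + 2"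
  proof (cases "2 \<le> k \<and> k < n + 2")
    case True
    then have "k - 2 \<in> \<tau> ` {..<n}" using permutes_image[OF \<tau>] by auto
    then show ?thesis using True that(4) by force
  qed (use that in linarith)
  then show "u k = w k" using assms by cases auto
qed

lemma wD_map_lincomb:
  "wD_map n \<sigma> s (\<lambda>k. a * x k + b * y k) = (\<lambda>k. a * wD_map n \<sigma> s x k + b * wD_map n \<sigma> s y k)"
  unfolding wD_map_def by (auto simp: algebra_simps sum.distrib sum_distrib_left)

lemma wD_map_in_picL: "\<sigma> permutes {..<n} \<Longrightarrow> s \<subseteq> {..<n} \<Longrightarrow> wD_map n \<sigma> s v \<in> picL n"
  by (auto simp: picL_def wD_map_beyond)

lemma wD_map_id:
  assumes "v \<in> picL n"
  shows "wD_map n id {} v = v"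
proof (rule pic_eqI[OF permutes_id])
  show "wD_map n id {} v 0 = v 0" by (simp add: wD_map_coord0)
  show "wD_map n id {} v 1 = v 1" by (rule wD_map_coord1)
  show "wD_map n id {} v (id j + 2) = v (id j + 2)" if "j < n" for j
    using wD_map_coordE[OF permutes_id empty_subsetI that] by simp
  show "wD_map n id {} v k = v k" if "n + 2 \<le> k" for k
    using assms wD_map_beyond[OF permutes_id empty_subsetI that] that by (simp add: picL_def)
qed

definition comp_swaps :: "nat \<Rightarrow> (nat \<Rightarrow> nat) \<Rightarrow> nat set \<Rightarrow> nat set \<Rightarrow> nat set" where
  "comp_swaps n \<tau> t s = {j. j < n \<and> (j \<in> t) \<noteq> (\<tau> j \<in> s)}"

lemma comp_swaps_subset: "comp_swaps n \<tau> t s \<subseteq> {..<n}"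
  unfolding comp_swaps_def by auto

lemma permutes_lessThan_preimage:
  assumes \<tau>: "\<tau> permutes {..<n}" and s: "s \<subseteq> {..<n}"
  shows "{j. j < n \<and> \<tau> j \<in> s} = \<tau> -` s"
proof -
  have "j < n" if "\<tau> j \<in> s" for j
    using that s permutes_not_in[OF \<tau>, of j] by fastforce
  then show ?thesis by auto
qed

lemma card_comp_swaps:
  assumes \<tau>: "\<tau> permutes {..<n}" and s: "s \<subseteq> {..<n}" and t: "t \<subseteq> {..<n}"
  shows "card (comp_swaps n \<tau> t s) + 2 * card (t \<inter> {j. j < n \<and> \<tau> j \<in> s}) = card t + card s"
proof -
  define s' where "s' = {j. j < n \<and> \<tau> j \<in> s}"
  have "card s' = card s"
    unfolding s'_def permutes_lessThan_preimage[OF \<tau> s]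
    using card_vimage_inj[OF permutes_inj[OF \<tau>]] permutes_surj[OF \<tau>] by simp
  have fin: "finite t" "finite s'"
    using finite_subset[OF t] unfolding s'_def by auto
  have "comp_swaps n \<tau> t s = (t \<union> s') - (t \<inter> s')"
    using t unfolding comp_swaps_def s'_def by auto
  then have "card (comp_swaps n \<tau> t s) = card (t \<union> s') - card (t \<inter> s')"
    using fin card_Diff_subset[of "t \<inter> s'" "t \<union> s'"] by auto
  moreover have "card (t \<union> s') + card (t \<inter> s') = card t + card s'"
    using card_Un_Int[OF fin] by simp
  moreover have "card (t \<inter> s') \<le> card (t \<union> s')"
    using fin by (intro card_mono) auto
  ultimately show ?thesis
    using \<open>card s' = card s\<close> unfolding s'_def by linarith
qed

lemma even_card_comp_swaps:
  assumes "\<tau> permutes {..<n}" "s \<subseteq> {..<n}" "t \<subseteq> {..<n}" "even (card s)" "even (card t)"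
  shows "even (card (comp_swaps n \<tau> t s))"
proof -
  have "even (card (comp_swaps n \<tau> t s) + 2 * card (t \<inter> {j. j < n \<and> \<tau> j \<in> s}))"
    unfolding card_comp_swaps[OF assms(1-3)] using assms(4,5) by simp
  then show ?thesis by simp
qed

lemma sum_wD_map_coordE:
  assumes \<tau>: "\<tau> permutes {..<n}" and s: "s \<subseteq> {..<n}" and t: "t \<subseteq> {..<n}"
  defines "s' \<equiv> {j. j < n \<and> \<tau> j \<in> s}"
  shows "(\<Sum>i\<in>s. wD_map n \<tau> t v (i + 2))
    = (\<Sum>j\<in>s'. v (j + 2)) - int (card (t \<inter> s')) * v 1 - 2 * (\<Sum>j\<in>t \<inter> s'. v (j + 2))"
proof -
  have fin: "finite s'" unfolding s'_def by simp
  have \<tau>_s': "inj_on \<tau> s'" "\<tau> ` s' = s"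
    unfolding s'_def permutes_lessThan_preimage[OF \<tau> s]
    using permutes_inj[OF \<tau>] permutes_surj[OF \<tau>] by (auto simp: inj_on_def)
  have "(\<Sum>i\<in>s. wD_map n \<tau> t v (i + 2)) = (\<Sum>j\<in>s'. wD_map n \<tau> t v (\<tau> j + 2))"
    using sum.reindex[OF \<tau>_s'(1), of "\<lambda>i. wD_map n \<tau> t v (i + 2)"] \<tau>_s'(2) by simp
  also have "\<dots> = (\<Sum>j\<in>s'. v (j + 2) - (if j \<in> t then v 1 + 2 * v (j + 2) else 0))"
    by (rule sum.cong) (auto simp: wD_map_coordE[OF \<tau> t] s'_def)
  also have "\<dots> = (\<Sum>j\<in>s'. v (j + 2)) - (\<Sum>j\<in>s' \<inter> t. v 1 + 2 * v (j + 2))"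
    unfolding sum.inter_restrict[OF fin] by (simp add: sum_subtractf)
  also have "\<dots> = (\<Sum>j\<in>s'. v (j + 2)) - int (card (t \<inter> s')) * v 1 - 2 * (\<Sum>j\<in>t \<inter> s'. v (j + 2))"
    by (simp add: sum.distrib sum_distrib_left Int_commute)
  finally show ?thesis .
qed

lemma int_half_eq:
  fixes a b c k :: nat
  assumes sum: "c + 2 * k = a + b" and "even a" "even b"
  shows "int (c div 2) = int (a div 2) + int (b div 2) - int k"
proof -
  obtain a' b' where ab: "a = 2 * a'" "b = 2 * b'" using \<open>even a\<close> \<open>even b\<close> by (auto elim!: evenE)
  with sum have "c = 2 * (a' + b' - k)" "k \<le> a' + b'" by linarith+
  then show ?thesis using ab by (simp add: of_nat_diff)
qed

lemma wD_map_comp_coord0: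
  assumes \<sigma>: "\<sigma> permutes {..<n}" and s: "s \<subseteq> {..<n}" "even (card s)"
    and \<tau>: "\<tau> permutes {..<n}" and t: "t \<subseteq> {..<n}" "even (card t)"
  shows "wD_map n \<sigma> s (wD_map n \<tau> t v) 0 = wD_map n (\<sigma> \<circ> \<tau>) (comp_swaps n \<tau> t s) v 0"
proof -
  define s' where "s' = {j. j < n \<and> \<tau> j \<in> s}"
  define u where "u = comp_swaps n \<tau> t s"
  have fin: "finite t" "finite s'"
    using finite_subset[OF t(1)] unfolding s'_def by auto
  have "t \<inter> s' \<subseteq> t \<union> s'" by blast
  moreover have "u = (t \<union> s') - (t \<inter> s')"
    using t unfolding u_def comp_swaps_def s'_def by auto
  ultimately have sum_u: "(\<Sum>j\<in>u. v (j + 2))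
      = (\<Sum>j\<in>t. v (j + 2)) + (\<Sum>j\<in>s'. v (j + 2)) - 2 * (\<Sum>j\<in>t \<inter> s'. v (j + 2))"
    using sum_diff[OF finite_UnI[OF fin], of "t \<inter> s'" "\<lambda>j. v (j + 2)"]
      sum_Un[OF fin, of "\<lambda>j. v (j + 2)"] by simp
  have card_u: "int (card u div 2) = int (card t div 2) + int (card s div 2) - int (card (t \<inter> s'))"
    using int_half_eq[OF card_comp_swaps[OF \<tau> s(1) t(1)] t(2) s(2)] unfolding u_def s'_def .
  show ?thesis
    unfolding u_def[symmetric] wD_map_coord0[OF s(1)] wD_map_coord0[OF t(1)] wD_map_coord1
      sum_wD_map_coordE[OF \<tau> s(1) t(1), folded s'_def]
      wD_map_coord0[OF comp_swaps_subset[of n \<tau> t s, folded u_def]] sum_u card_u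
    by (simp add: algebra_simps)
qed

lemma wD_map_comp:
  assumes \<sigma>: "\<sigma> permutes {..<n}" and s: "s \<subseteq> {..<n}" "even (card s)"
    and \<tau>: "\<tau> permutes {..<n}" and t: "t \<subseteq> {..<n}" "even (card t)"
  shows "wD_map n \<sigma> s (wD_map n \<tau> t v) = wD_map n (\<sigma> \<circ> \<tau>) (comp_swaps n \<tau> t s) v"
proof -
  have \<sigma>\<tau>: "(\<sigma> \<circ> \<tau>) permutes {..<n}" using permutes_compose[OF \<tau> \<sigma>] .
  have u: "comp_swaps n \<tau> t s \<subseteq> {..<n}" by (rule comp_swaps_subset)
  show ?thesis
  proof (rule pic_eqI[OF \<sigma>\<tau>])
    show "wD_map n \<sigma> s (wD_map n \<tau> t v) 0 = wD_map n (\<sigma> \<circ> \<tau>) (comp_swaps n \<tau> t s) v 0"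
      by (rule wD_map_comp_coord0[OF \<sigma> s \<tau> t])
    show "wD_map n \<sigma> s (wD_map n \<tau> t v) 1 = wD_map n (\<sigma> \<circ> \<tau>) (comp_swaps n \<tau> t s) v 1"
      by (simp only: wD_map_coord1)
    show "wD_map n \<sigma> s (wD_map n \<tau> t v) ((\<sigma> \<circ> \<tau>) j + 2)
        = wD_map n (\<sigma> \<circ> \<tau>) (comp_swaps n \<tau> t s) v ((\<sigma> \<circ> \<tau>) j + 2)" if j: "j < n" for j
    proof -
      have "\<tau> j < n" using permutes_in_image[OF \<tau>] j by simp
      then show ?thesis
        using wD_map_coordE[OF \<sigma> s(1)] wD_map_coordE[OF \<tau> t(1) j]
          wD_map_coordE[OF \<sigma>\<tau> u j] wD_map_coord1
        by (cases "j \<in> t"; cases "\<tau> j \<in> s") (simp_all add: comp_swaps_def j)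
    qed
    show "wD_map n \<sigma> s (wD_map n \<tau> t v) k = wD_map n (\<sigma> \<circ> \<tau>) (comp_swaps n \<tau> t s) v k"
      if "n + 2 \<le> k" for k
      using that by (simp add: wD_map_beyond[OF \<sigma> s(1)] wD_map_beyond[OF \<sigma>\<tau> u])
  qed
qed

lemma WD_iff:
  "g \<in> WD n \<longleftrightarrow>
     (\<exists>\<sigma> s. g = wD_map n \<sigma> s \<and> \<sigma> permutes {..<n} \<and> s \<subseteq> {..<n} \<and> even (card s))"
  by (auto simp: WD_def)

lemma WDgrp_simps [simp]:
  "carrier (WDgrp n) = WD n" "monoid.mult (WDgrp n) = (\<circ>)" "one (WDgrp n) = wD_map n id {}"
  by (simp_all add: WDgrp_def)

lemma WD_comp_closed:
  assumes "g \<in> WD n" "h \<in> WD n"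
  shows "g \<circ> h \<in> WD n"
proof -
  obtain \<sigma> s where g: "g = wD_map n \<sigma> s" "\<sigma> permutes {..<n}" "s \<subseteq> {..<n}" "even (card s)"
    using assms(1) by (auto simp: WD_iff)
  obtain \<tau> t where h: "h = wD_map n \<tau> t" "\<tau> permutes {..<n}" "t \<subseteq> {..<n}" "even (card t)"
    using assms(2) by (auto simp: WD_iff)
  have "g \<circ> h = wD_map n (\<sigma> \<circ> \<tau>) (comp_swaps n \<tau> t s)"
    using wD_map_comp[OF g(2-4) h(2-4)] g(1) h(1) by auto
  then show ?thesis
    unfolding WD_iff
    using even_card_comp_swaps[OF h(2) g(3) h(3) g(4) h(4)] comp_swaps_subset
      permutes_compose[OF h(2) g(2)] by blast
qed

lemma WD_left_inverse:
  assumes "g \<in> WD n"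
  shows "\<exists>h\<in>WD n. h \<circ> g = wD_map n id {}"
proof -
  obtain \<sigma> s where g: "g = wD_map n \<sigma> s" "\<sigma> permutes {..<n}" "s \<subseteq> {..<n}" "even (card s)"
    using assms by (auto simp: WD_iff)
  let ?\<sigma>' = "inv_into UNIV \<sigma>"
  have \<sigma>': "?\<sigma>' permutes {..<n}" "?\<sigma>' \<circ> \<sigma> = id"
    using permutes_inv[OF g(2)] permutes_inv_o(2)[OF g(2)] .
  have s': "\<sigma> ` s \<subseteq> {..<n}" "card (\<sigma> ` s) = card s"
    using g(3) permutes_in_image[OF g(2)] card_image[OF inj_on_subset[OF permutes_inj_on[OF g(2)] g(3)]]
    by auto
  have "comp_swaps n \<sigma> s (\<sigma> ` s) = {}"
    using g(3) permutes_inj_on[OF g(2)] by (auto simp: comp_swaps_def inj_on_image_mem_iff)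
  then have "wD_map n ?\<sigma>' (\<sigma> ` s) \<circ> g = wD_map n id {}"
    unfolding g(1) using wD_map_comp[OF \<sigma>'(1) s'(1) _ g(2-4)] g(4) s'(2) \<sigma>'(2)
    by (simp add: fun_eq_iff)
  moreover have "wD_map n ?\<sigma>' (\<sigma> ` s) \<in> WD n"
    unfolding WD_iff using \<sigma>'(1) s' g(4) by metis
  ultimately show ?thesis by blast
qed

lemma group_WDgrp: "group (WDgrp n)"
proof (rule groupI)
  show "\<one>\<^bsub>WDgrp n\<^esub> \<in> carrier (WDgrp n)"
    by (auto simp: WD_iff intro!: exI[of _ id] permutes_id)
  show "g \<otimes>\<^bsub>WDgrp n\<^esub> h \<in> carrier (WDgrp n)" if "g \<in> carrier (WDgrp n)" "h \<in> carrier (WDgrp n)" for g h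
    using that WD_comp_closed by simp
  show "f \<otimes>\<^bsub>WDgrp n\<^esub> g \<otimes>\<^bsub>WDgrp n\<^esub> h = f \<otimes>\<^bsub>WDgrp n\<^esub> (g \<otimes>\<^bsub>WDgrp n\<^esub> h)" for f g h
    by (simp add: o_assoc)
  show "\<exists>h\<in>carrier (WDgrp n). h \<otimes>\<^bsub>WDgrp n\<^esub> g = \<one>\<^bsub>WDgrp n\<^esub>" if "g \<in> carrier (WDgrp n)" for g
    using WD_left_inverse that by simp
  fix g assume "g \<in> carrier (WDgrp n)"
  then obtain \<tau> t where g: "g = wD_map n \<tau> t" "\<tau> permutes {..<n}" "t \<subseteq> {..<n}" "even (card t)"
    by (auto simp: WD_iff)
  have "comp_swaps n \<tau> t {} = t" using g(3) by (auto simp: comp_swaps_def)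
  then show "\<one>\<^bsub>WDgrp n\<^esub> \<otimes>\<^bsub>WDgrp n\<^esub> g = g"
    unfolding g(1) using wD_map_comp[OF permutes_id _ _ g(2-4), of "{}"] by (simp add: fun_eq_iff)
qed

lemma finite_WD: "finite (WD n)"
proof -
  have "WD n \<subseteq> (\<lambda>(\<sigma>, s). wD_map n \<sigma> s) ` ({\<sigma>. \<sigma> permutes {..<n}} \<times> Pow {..<n})"
    by (auto simp: WD_def)
  moreover have "finite ({\<sigma>. \<sigma> permutes {..<n}} \<times> Pow {..<n})"
    using finite_permutations[of "{..<n}"] by simp
  ultimately show ?thesis using finite_subset by blast
qed

lemma pic_action_WDgrp: "pic_action (WDgrp n) (picL n)"
proof -
  interpret group "WDgrp n" by (rule group_WDgrp)
  show ?thesis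
  proof
    show "g \<otimes>\<^bsub>WDgrp n\<^esub> h = g \<circ> h" for g h by simp
    show "\<one>\<^bsub>WDgrp n\<^esub> v = v" if "v \<in> picL n" for v using wD_map_id[OF that] by simp
    show "g v \<in> picL n" if "g \<in> carrier (WDgrp n)" for g v
      using that by (auto simp: WD_iff wD_map_in_picL)
    show "g (\<lambda>k. a * x k + b * y k) = (\<lambda>k. a * g x k + b * g y k)"
      if "g \<in> carrier (WDgrp n)" for g a x b y
      using that by (auto simp: WD_iff wD_map_lincomb)
    show "(\<lambda>k. 0) \<in> picL n" by (simp add: picL_def)
    show "(\<lambda>k. a * x k + b * y k) \<in> picL n" if "x \<in> picL n" "y \<in> picL n" for x y a b
      using that by (simp add: picL_def)
  qed
qed

section \<open>Two kills H^1\<close>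

(* For the intersection form with F^2 = 0, F.S = 1, E_j^2 = -1 and E_j orthogonal to F, S and
   E_k (k ~= j), coordinates 1, 2j+2 and 2j+3 of line_coords n v are the intersection numbers of v
   with F, q_j^+ = F - E_j and q_j^- = E_j; coordinate 0 is a W(D_n)-invariant linear form.  Since
   W(D_n) fixes F and permutes the lines, it acts on these coordinates as recorded by relabels. *)
definition line_coords :: "nat \<Rightarrow> pic \<Rightarrow> (nat \<Rightarrow> int)" where
  "line_coords n v = (\<lambda>i.
     if i = 0 then 2 * v 0 + (\<Sum>j<n. v (j + 2))
     else if i = 1 then v 1
     else if i < 2 * n + 2 then
       (if even i then v 1 + v ((i - 2) div 2 + 2) else - v ((i - 2) div 2 + 2))
     else 0)"

definition from_line_coords :: "nat \<Rightarrow> (nat \<Rightarrow> int) \<Rightarrow> pic" where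
  "from_line_coords n y = (\<lambda>k.
     if k = 0 then y 0 + (\<Sum>j<n. y (2 * j + 3))
     else if k = 1 then 2 * y 1
     else if k < n + 2 then - y 1 + y (2 * (k - 2) + 2) - y (2 * (k - 2) + 3)
     else 0)"

definition relabels :: "nat \<Rightarrow> (nat \<Rightarrow> nat) \<Rightarrow> nat set \<Rightarrow> (nat \<Rightarrow> int) \<Rightarrow> (nat \<Rightarrow> int) \<Rightarrow> bool" where
  "relabels n \<sigma> s y' y \<longleftrightarrow> y' 0 = y 0 \<and> y' 1 = y 1 \<and>
     (\<forall>j<n. y' (2 * \<sigma> j + 2) = y (if j \<in> s then 2 * j + 3 else 2 * j + 2) \<and>
            y' (2 * \<sigma> j + 3) = y (if j \<in> s then 2 * j + 2 else 2 * j + 3))"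

lemma line_coords_0: "line_coords n v 0 = 2 * v 0 + (\<Sum>j<n. v (j + 2))"
  and line_coords_1: "line_coords n v 1 = v 1"
  and line_coords_plus: "j < n \<Longrightarrow> line_coords n v (2 * j + 2) = v 1 + v (j + 2)"
  and line_coords_minus: "j < n \<Longrightarrow> line_coords n v (2 * j + 3) = - v (j + 2)"
  unfolding line_coords_def by auto

lemma from_line_coords_0: "from_line_coords n y 0 = y 0 + (\<Sum>j<n. y (2 * j + 3))"
  and from_line_coords_1: "from_line_coords n y 1 = 2 * y 1"
  and from_line_coords_E: "j < n \<Longrightarrow> from_line_coords n y (j + 2) = - y 1 + y (2 * j + 2) - y (2 * j + 3)"
  and from_line_coords_beyond: "n + 2 \<le> k \<Longrightarrow> from_line_coords n y k = 0"
  unfolding from_line_coords_def by auto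

lemma line_coords_lincomb:
  "line_coords n (\<lambda>k. a * x k + b * y k) = (\<lambda>i. a * line_coords n x i + b * line_coords n y i)"
  unfolding line_coords_def by (simp add: fun_eq_iff algebra_simps sum.distrib sum_distrib_left)

lemma from_line_coords_lincomb:
  "from_line_coords n (\<lambda>i. a * x i + b * y i) = (\<lambda>k. a * from_line_coords n x k + b * from_line_coords n y k)"
  unfolding from_line_coords_def by (simp add: fun_eq_iff algebra_simps sum.distrib sum_distrib_left)

lemma from_line_coords_in_picL: "from_line_coords n y \<in> picL n"
  by (simp add: picL_def from_line_coords_beyond)

lemma from_line_coords_line_coords:
  assumes "v \<in> picL n"
  shows "from_line_coords n (line_coords n v) = (\<lambda>k. 2 * v k)"
proof (rule pic_eqI[OF permutes_id])
  have "(\<Sum>j<n. line_coords n v (2 * j + 3)) = - (\<Sum>j<n. v (j + 2))"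
    by (simp add: line_coords_minus sum_negf)
  then show "from_line_coords n (line_coords n v) 0 = 2 * v 0"
    by (simp add: from_line_coords_0 line_coords_0)
  show "from_line_coords n (line_coords n v) 1 = 2 * v 1"
    by (simp add: from_line_coords_1 line_coords_1)
  show "from_line_coords n (line_coords n v) (id j + 2) = 2 * v (id j + 2)" if "j < n" for j
    using that by (simp add: from_line_coords_E line_coords_1 line_coords_plus line_coords_minus)
  show "from_line_coords n (line_coords n v) k = 2 * v k" if "n + 2 \<le> k" for k
    using that assms by (simp add: from_line_coords_beyond picL_def)
qed

lemma int_card_eq_twice_half: "even (card s) \<Longrightarrow> int (card s) = 2 * int (card s div 2)"
  by (auto elim!: evenE)

lemma relabels_line_coords:
  assumes \<sigma>: "\<sigma> permutes {..<n}" and s: "s \<subseteq> {..<n}" "even (card s)"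
  shows "relabels n \<sigma> s (line_coords n (wD_map n \<sigma> s v)) (line_coords n v)"
  unfolding relabels_def
proof (intro conjI allI impI)
  let ?g = "wD_map n \<sigma> s v"
  have "(\<Sum>k<n. ?g (k + 2)) = (\<Sum>j<n. ?g (\<sigma> j + 2))"
    using sum.permute[OF \<sigma>, of "\<lambda>k. ?g (k + 2)"] by simp
  also have "\<dots> = (\<Sum>j<n. v (j + 2) - (if j \<in> s then v 1 + 2 * v (j + 2) else 0))"
    by (rule sum.cong) (auto simp: wD_map_coordE[OF \<sigma> s(1)])
  also have "\<dots> = (\<Sum>j<n. v (j + 2)) - (\<Sum>j\<in>s. v 1 + 2 * v (j + 2))"
    using s(1) by (simp add: sum_subtractf sum.inter_restrict[symmetric] Int_absorb1)
  also have "\<dots> = (\<Sum>j<n. v (j + 2)) - 2 * (int (card s div 2) * v 1) - 2 * (\<Sum>j\<in>s. v (j + 2))"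
    using int_card_eq_twice_half[OF s(2)] by (simp add: sum.distrib sum_distrib_left)
  finally show "line_coords n ?g 0 = line_coords n v 0"
    unfolding line_coords_0 wD_map_coord0[OF s(1)] by (simp add: algebra_simps)
  show "line_coords n ?g 1 = line_coords n v 1"
    by (simp add: line_coords_1 wD_map_coord1)
  fix j assume j: "j < n"
  have \<sigma>j: "\<sigma> j < n" using permutes_in_image[OF \<sigma>] j by simp
  show "line_coords n ?g (2 * \<sigma> j + 2) = line_coords n v (if j \<in> s then 2 * j + 3 else 2 * j + 2)"
    using j \<sigma>j by (simp add: line_coords_plus line_coords_minus line_coords_1
                              wD_map_coordE[OF \<sigma> s(1) j] wD_map_coord1)
  show "line_coords n ?g (2 * \<sigma> j + 3) = line_coords n v (if j \<in> s then 2 * j + 2 else 2 * j + 3)"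
    using j \<sigma>j by (simp add: line_coords_plus line_coords_minus line_coords_1
                              wD_map_coordE[OF \<sigma> s(1) j] wD_map_coord1)
qed

lemma from_line_coords_relabels:
  assumes \<sigma>: "\<sigma> permutes {..<n}" and s: "s \<subseteq> {..<n}" "even (card s)"
    and y: "relabels n \<sigma> s y' y"
  shows "from_line_coords n y' = wD_map n \<sigma> s (from_line_coords n y)"
proof (rule pic_eqI[OF \<sigma>])
  have y0: "y' 0 = y 0" and y1: "y' 1 = y 1"
    and y_plus: "\<And>j. j < n \<Longrightarrow> y' (2 * \<sigma> j + 2) = y (if j \<in> s then 2 * j + 3 else 2 * j + 2)"
    and y_minus: "\<And>j. j < n \<Longrightarrow> y' (2 * \<sigma> j + 3) = y (if j \<in> s then 2 * j + 2 else 2 * j + 3)"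
    using y unfolding relabels_def by auto
  have "(\<Sum>k<n. y' (2 * k + 3)) = (\<Sum>j<n. y' (2 * \<sigma> j + 3))"
    using sum.permute[OF \<sigma>, of "\<lambda>k. y' (2 * k + 3)"] by simp
  also have "\<dots> = (\<Sum>j<n. y (2 * j + 3) + (if j \<in> s then y (2 * j + 2) - y (2 * j + 3) else 0))"
    by (rule sum.cong) (auto simp: y_minus)
  also have "\<dots> = (\<Sum>j<n. y (2 * j + 3)) + (\<Sum>j\<in>s. y (2 * j + 2) - y (2 * j + 3))"
    using s(1) by (simp add: sum.distrib sum.inter_restrict[symmetric] Int_absorb1)
  finally have sum_y': "(\<Sum>k<n. y' (2 * k + 3))
      = (\<Sum>j<n. y (2 * j + 3)) + (\<Sum>j\<in>s. y (2 * j + 2) - y (2 * j + 3))" .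
  have "(\<Sum>j\<in>s. from_line_coords n y (j + 2)) = (\<Sum>j\<in>s. - y 1 + (y (2 * j + 2) - y (2 * j + 3)))"
    by (rule sum.cong) (use s(1) in \<open>auto simp: from_line_coords_E\<close>)
  also have "\<dots> = - (2 * (int (card s div 2) * y 1)) + (\<Sum>j\<in>s. y (2 * j + 2) - y (2 * j + 3))"
    using int_card_eq_twice_half[OF s(2)] by (simp add: sum.distrib sum_subtractf)
  finally show "from_line_coords n y' 0 = wD_map n \<sigma> s (from_line_coords n y) 0"
    unfolding wD_map_coord0[OF s(1)] from_line_coords_0 from_line_coords_1 sum_y' y0
    by (simp add: algebra_simps)
  show "from_line_coords n y' 1 = wD_map n \<sigma> s (from_line_coords n y) 1"
    by (simp add: wD_map_coord1 from_line_coords_1 y1)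
  fix j assume j: "j < n"
  have \<sigma>j: "\<sigma> j < n" using permutes_in_image[OF \<sigma>] j by simp
  show "from_line_coords n y' (\<sigma> j + 2) = wD_map n \<sigma> s (from_line_coords n y) (\<sigma> j + 2)"
    unfolding wD_map_coordE[OF \<sigma> s(1) j] from_line_coords_E[OF \<sigma>j] from_line_coords_E[OF j]
      from_line_coords_1 y_plus[OF j] y_minus[OF j] y1
    by auto
next
  fix k assume "n + 2 \<le> k"
  then show "from_line_coords n y' k = wD_map n \<sigma> s (from_line_coords n y) k"
    by (simp add: from_line_coords_beyond wD_map_beyond[OF \<sigma> s(1)])
qed

lemma relabels_map: "relabels n \<sigma> s y' y \<Longrightarrow> relabels n \<sigma> s (\<lambda>i. h (y' i)) (\<lambda>i. h (y i))"
  unfolding relabels_def by auto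

(* In line coordinates, h w = w + N c says that line_coords w + N line_coords c relabels
   line_coords w.  Relabelling commutes with coordinatewise division by N, which turns the former
   into (line_coords w div N) + line_coords c. *)
lemma wD_map_from_line_coords_div:
  assumes \<sigma>: "\<sigma> permutes {..<n}" and s: "s \<subseteq> {..<n}" "even (card s)"
    and N: "N > 0" and c: "c \<in> picL n"
    and w: "wD_map n \<sigma> s w = (\<lambda>k. w k + int N * c k)"
  defines "M \<equiv> from_line_coords n (\<lambda>i. line_coords n w i div int N)"
  shows "wD_map n \<sigma> s M = (\<lambda>k. M k + 2 * c k)"
proof -
  let ?m = "\<lambda>i. line_coords n w i div int N"
  have "relabels n \<sigma> s (\<lambda>i. line_coords n w i + int N * line_coords n c i) (line_coords n w)"
    using relabels_line_coords[OF \<sigma> s, of w] line_coords_lincomb[of n 1 w "int N" c]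
    unfolding w by simp
  from relabels_map[OF this, of "\<lambda>x. x div int N"]
  have "relabels n \<sigma> s (\<lambda>i. ?m i + line_coords n c i) ?m"
    using N by (simp add: add.commute)
  then have "from_line_coords n (\<lambda>i. ?m i + line_coords n c i) = wD_map n \<sigma> s M"
    unfolding M_def by (rule from_line_coords_relabels[OF \<sigma> s])
  moreover have "from_line_coords n (\<lambda>i. ?m i + line_coords n c i) = (\<lambda>k. M k + 2 * c k)"
    using from_line_coords_lincomb[of n 1 ?m 1 "line_coords n c"]
      from_line_coords_line_coords[OF c]
    unfolding M_def by simp
  ultimately show ?thesis by simp
qed

lemma coboundary_two_multiple_WD:
  assumes H: "subgroup H (WDgrp n)" and f: "cocycle (picL n) H f"
  shows "coboundary (picL n) H (\<lambda>g k. 2 * f g k)"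
proof -
  interpret H: pic_action "WDgrp n\<lparr>carrier := H\<rparr>" "picL n"
    using pic_action.subgroup_pic_action[OF pic_action_WDgrp H] .
  obtain w where w: "\<And>h. h \<in> H \<Longrightarrow> (\<lambda>k. int (card H) * f h k) = (\<lambda>k. h w k - w k)"
    using H.coboundary_card_multiple[of f] f unfolding coboundary_def by auto
  have H_WD: "H \<subseteq> WD n" using subgroup.subset[OF H] by simp
  have "card H > 0"
    using finite_subset[OF H_WD finite_WD] subgroup.one_closed[OF H] card_gt_0_iff by blast
  define M where "M = from_line_coords n (\<lambda>i. line_coords n w i div int (card H))"
  have "(\<lambda>k. 2 * f h k) = (\<lambda>k. h M k - M k)" if h: "h \<in> H" for h
  proof -
    obtain \<sigma> s where g: "h = wD_map n \<sigma> s" "\<sigma> permutes {..<n}" "s \<subseteq> {..<n}" "even (card s)"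
      using h H_WD WD_iff[of h n] by blast
    have "wD_map n \<sigma> s w = (\<lambda>k. w k + int (card H) * f h k)"
      using fun_cong[OF w[OF h]] g(1) by auto
    from wD_map_from_line_coords_div[OF g(2-4) \<open>card H > 0\<close> _ this]
    show ?thesis using f h g(1) unfolding cocycle_def M_def by auto
  qed
  then show ?thesis
    unfolding coboundary_def using from_line_coords_in_picL M_def by blast
qed

theorem lemma3p1:
  fixes n :: nat and G G2 :: "(pic \<Rightarrow> pic) set"
  assumes "subgroup G (WDgrp n)"
    and "sylow2 n G2 G"
  shows "H1_condition n G \<longleftrightarrow> H1_condition n G2"
proof -
  obtain a where G2: "subgroup G2 (WDgrp n)" "G2 \<subseteq> G" "card G2 = 2 ^ a"
    and not_dvd: "\<not> 2 ^ Suc a dvd card G"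
    using assms(2) unfolding sylow2_def by blast
  interpret W: group "WDgrp n" by (rule group_WDgrp)
  interpret WG: pic_action "WDgrp n\<lparr>carrier := G\<rparr>" "picL n"
    using pic_action.subgroup_pic_action[OF pic_action_WDgrp assms(1)] .
  have fin: "finite G" using finite_subset[OF _ finite_WD] subgroup.subset[OF assms(1)] by simp
  have G2_G: "subgroup G2 (WDgrp n\<lparr>carrier := G\<rparr>)" using W.subgroup_incl[OF G2(1) assms(1) G2(2)] .
  have odd_index: "odd (card (lcosets\<^bsub>WDgrp n\<lparr>carrier := G\<rparr>\<^esub> G2))"
    using WG.odd_card_lcosets[OF _ G2_G G2(3)] fin not_dvd by (simp add: order_def)
  have "H1_trivial (picL n) H"
    if H1_G2: "H1_condition n G2" and H: "subgroup H (WDgrp n)" "H \<subseteq> G" for H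
  proof (rule WG.H1_trivial_if_odd_index[OF _ G2_G odd_index])
    show "H1_trivial (picL n) Q" if "subgroup Q (WDgrp n\<lparr>carrier := G\<rparr>)" "Q \<subseteq> G2" for Q
      using H1_G2 W.incl_subgroup[OF assms(1) that(1)] that(2) G2(2)
      unfolding H1_condition_def H1_vanishes_iff_H1_trivial by blast
  qed (use fin W.subgroup_incl[OF H(1) assms(1) H(2)] coboundary_two_multiple_WD[OF H(1)] in auto)
  with G2(2) show ?thesis unfolding H1_condition_def H1_vanishes_iff_H1_trivial by blast
qed

end
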